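(* Fix $n\ge 1$, $\theta\in(1/2,7/8]$, an integer $k\ge 1$, an interval $[\underline h,\bar h]\subset(0,1)$, $h_1\in[0,1]$ and $\alpha\in[0,1]$. Fix any realization of the couplings $(J_X)_{X\subset\{1,\dots,n\}}$ (with $J_X\ge 0$) and of the integer vector $\boldsymbol\tau=(\tau_1,\dots,\tau_n)$. Assume that for every $h_0\in[\underline h,\bar h]$ the Gibbs measure $\langle\cdot\rangle_{h_0,h_1,\alpha}$ satisfies $\langle\sigma_i\sigma_j\rangle_{h_0,h_1,\alpha}-\langle\sigma_i\rangle_{h_0,h_1,\alpha}\langle\sigma_j\rangle_{h_0,h_1,\alpha}\ge 0$ for all $i,j\in\{1,\dots,n\}$. Then $$\int_{\underline h}^{\bar h}dh_0\,\big\langle\big(Q_k-\langle Q_k\rangle_{h_0,h_1,\alpha}\big)^2\big\rangle_{h_0,h_1,\alpha}\le\frac{2k}{n}.$$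
   Context: Spins $\boldsymbol\sigma=(\sigma_1,\dots,\sigma_n)\in\{-1,1\}^n$; for $X\subset\{1,\dots,n\}$ write $\sigma_X=\prod_{i\in X}\sigma_i$. The couplings $J_X\ge 0$ are indexed by all subsets $X\subset\{1,\dots,n\}$; $\tau_i$ are nonnegative integers (in the random model they are i.i.d. Poisson with mean $\alpha n^{\theta-1}$, independent of the couplings). The Hamiltonian is $\mathcal H(\boldsymbol\sigma)=-\sum_{X\subset\{1,\dots,n\}}J_X\sigma_X-h_0\sum_{i=1}^n\sigma_i-h_1\sum_{i=1}^n\tau_i\sigma_i$, with partition function $\mathcal Z=\sum_{\boldsymbol\sigma}e^{-\mathcal H(\boldsymbol\sigma)}$ and Gibbs expectation $\langle f\rangle_{h_0,h_1,\alpha}=\mathcal Z^{-1}\sum_{\boldsymbol\sigma}f(\boldsymbol\sigma)e^{-\mathcal H(\boldsymbol\sigma)}$. For functions of $k$ replicas $\boldsymbol\sigma^{(1)},\dots,\boldsymbol\sigma^{(k)}$, $\langle\cdot\rangle$ denotes expectation under the $k$-fold product of the Gibbs measure (independent replicas). The overlap is $Q_k=\frac1n\sum_{i=1}^n\sigma_i^{(1)}\cdots\sigma_i^{(k)}$. *)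

theory Defs
  imports "HOL-Analysis.Analysis"
begin

text \<open>Spin configurations on sites 0..n-1 (0-based indexing of {1..n}); values outside
  the sites are fixed to 1 so that the configuration space is finite.\<close>
definition spins :: "nat \<Rightarrow> (nat \<Rightarrow> real) set" where
  "spins n = {\<sigma>. (\<forall>i<n. \<sigma> i = 1 \<or> \<sigma> i = -1) \<and> (\<forall>i\<ge>n. \<sigma> i = 1)}"

definition hamiltonian ::
  "nat \<Rightarrow> (nat set \<Rightarrow> real) \<Rightarrow> (nat \<Rightarrow> nat) \<Rightarrow> real \<Rightarrow> real \<Rightarrow> (nat \<Rightarrow> real) \<Rightarrow> real" where
  "hamiltonian n J \<tau> h0 h1 \<sigma> =
     - (\<Sum>X\<in>Pow {..<n}. J X * (\<Prod>i\<in>X. \<sigma> i))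
     - h0 * (\<Sum>i<n. \<sigma> i) - h1 * (\<Sum>i<n. real (\<tau> i) * \<sigma> i)"

definition partition_fn ::
  "nat \<Rightarrow> (nat set \<Rightarrow> real) \<Rightarrow> (nat \<Rightarrow> nat) \<Rightarrow> real \<Rightarrow> real \<Rightarrow> real" where
  "partition_fn n J \<tau> h0 h1 = (\<Sum>\<sigma>\<in>spins n. exp (- hamiltonian n J \<tau> h0 h1 \<sigma>))"

definition gibbs ::
  "nat \<Rightarrow> (nat set \<Rightarrow> real) \<Rightarrow> (nat \<Rightarrow> nat) \<Rightarrow> real \<Rightarrow> real \<Rightarrow> ((nat \<Rightarrow> real) \<Rightarrow> real) \<Rightarrow> real" where
  "gibbs n J \<tau> h0 h1 f =
     (\<Sum>\<sigma>\<in>spins n. f \<sigma> * exp (- hamiltonian n J \<tau> h0 h1 \<sigma>)) / partition_fn n J \<tau> h0 h1"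

text \<open>Gibbs expectation of an observable of k independent replicas
  (replica a < k is s a), under the k-fold product Gibbs measure.\<close>
definition gibbs_rep ::
  "nat \<Rightarrow> (nat set \<Rightarrow> real) \<Rightarrow> (nat \<Rightarrow> nat) \<Rightarrow> real \<Rightarrow> real \<Rightarrow> nat
     \<Rightarrow> ((nat \<Rightarrow> nat \<Rightarrow> real) \<Rightarrow> real) \<Rightarrow> real" where
  "gibbs_rep n J \<tau> h0 h1 k f =
     (\<Sum>s\<in>PiE {..<k} (\<lambda>_. spins n).
        f s * (\<Prod>a<k. exp (- hamiltonian n J \<tau> h0 h1 (s a))))
     / partition_fn n J \<tau> h0 h1 ^ k"

definition overlap :: "nat \<Rightarrow> nat \<Rightarrow> (nat \<Rightarrow> nat \<Rightarrow> real) \<Rightarrow> real" where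
  "overlap n k s = (1 / real n) * (\<Sum>i<n. \<Prod>a<k. s a i)"

end

theory Submission
  imports Defs
begin

text \<open>Because the replicas are independent, <Q_k> = n^-1 sum_i <sigma_i>^k and
  <Q_k^2> = n^-2 sum_ij <sigma_i sigma_j>^k, so the variance of the overlap is
  n^-2 sum_ij (<sigma_i sigma_j>^k - (<sigma_i><sigma_j>)^k). For b <= a in [-1, 1] one has
  a^k - b^k <= k (a - b); since the truncated correlations are nonnegative, the variance is
  at most k n^-2 sum_ij (<sigma_i sigma_j> - <sigma_i><sigma_j>), which is k n^-2 times the
  h0-derivative of the total magnetization sum_i <sigma_i>. Integrating in h0 bounds the
  integral by k n^-2 times the increment of the magnetization, which is at most 2n.\<close>

lemma finite_spins: "finite (spins n)"
proof -
  have "spins n \<subseteq> (\<lambda>f i. if i < n then f i else 1) ` PiE {..<n} (\<lambda>_. {-1, 1::real})"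
  proof
    fix \<sigma> assume \<sigma>: "\<sigma> \<in> spins n"
    then have "\<sigma> = (\<lambda>i. if i < n then restrict \<sigma> {..<n} i else 1)"
      by (auto simp: spins_def)
    moreover have "restrict \<sigma> {..<n} \<in> PiE {..<n} (\<lambda>_. {-1, 1})"
      using \<sigma> by (auto simp: spins_def)
    ultimately show "\<sigma> \<in> (\<lambda>f i. if i < n then f i else 1) ` PiE {..<n} (\<lambda>_. {-1, 1})"
      by (rule image_eqI)
  qed
  then show ?thesis
    by (rule finite_subset) (auto intro: finite_PiE)
qed

lemma one_in_spins: "(\<lambda>_. 1) \<in> spins n"
  by (simp add: spins_def)

lemma abs_spin: "\<sigma> \<in> spins n \<Longrightarrow> \<bar>\<sigma> i\<bar> = 1"
  by (cases "i < n") (auto simp: spins_def)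

lemma partition_fn_pos: "partition_fn n J \<tau> h h1 > 0"
  unfolding partition_fn_def
  using finite_spins one_in_spins by (rule sum_pos2) auto

lemma gibbs_const: "gibbs n J \<tau> h h1 (\<lambda>_. c) = c"
  using partition_fn_pos[of n J \<tau> h h1]
  by (simp add: gibbs_def partition_fn_def sum_distrib_left[symmetric])

lemma gibbs_sum:
  "gibbs n J \<tau> h h1 (\<lambda>\<sigma>. \<Sum>j\<in>A. f j \<sigma>) = (\<Sum>j\<in>A. gibbs n J \<tau> h h1 (f j))"
  unfolding gibbs_def
  by (simp add: sum_distrib_right sum_divide_distrib[symmetric] sum.swap[of _ A])

lemma abs_gibbs_le_one:
  assumes "\<And>\<sigma>. \<sigma> \<in> spins n \<Longrightarrow> \<bar>f \<sigma>\<bar> \<le> 1"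
  shows "\<bar>gibbs n J \<tau> h h1 f\<bar> \<le> 1"
proof -
  let ?W = "\<lambda>\<sigma>. exp (- hamiltonian n J \<tau> h h1 \<sigma>)"
  have "\<bar>\<Sum>\<sigma>\<in>spins n. f \<sigma> * ?W \<sigma>\<bar> \<le> (\<Sum>\<sigma>\<in>spins n. \<bar>f \<sigma>\<bar> * ?W \<sigma>)"
    using sum_abs[of "\<lambda>\<sigma>. f \<sigma> * ?W \<sigma>"] by (simp add: abs_mult)
  also have "\<dots> \<le> partition_fn n J \<tau> h h1"
    unfolding partition_fn_def by (intro sum_mono mult_left_le_one_le) (simp_all add: assms)
  finally show ?thesis
    unfolding gibbs_def abs_divide
    using partition_fn_pos[of n J \<tau> h h1] by (simp add: divide_le_eq_1)
qed

lemma abs_sum_magnetization_le: "\<bar>\<Sum>i<n. gibbs n J \<tau> h h1 (\<lambda>\<sigma>. \<sigma> i)\<bar> \<le> n"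
proof -
  have "\<bar>\<Sum>i<n. gibbs n J \<tau> h h1 (\<lambda>\<sigma>. \<sigma> i)\<bar> \<le> (\<Sum>i<n. \<bar>gibbs n J \<tau> h h1 (\<lambda>\<sigma>. \<sigma> i)\<bar>)"
    by (rule sum_abs)
  also have "\<dots> \<le> (\<Sum>i<n. 1)"
    by (intro sum_mono abs_gibbs_le_one) (simp add: abs_spin)
  finally show ?thesis by simp
qed

lemma has_real_derivative_gibbs:
  "((\<lambda>h. gibbs n J \<tau> h h1 f) has_real_derivative
     gibbs n J \<tau> h h1 (\<lambda>\<sigma>. f \<sigma> * (\<Sum>j<n. \<sigma> j))
     - gibbs n J \<tau> h h1 f * gibbs n J \<tau> h h1 (\<lambda>\<sigma>. \<Sum>j<n. \<sigma> j)) (at h)"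
proof -
  define W where "W h \<sigma> = exp (- hamiltonian n J \<tau> h h1 \<sigma>)" for h \<sigma>
  define Z where "Z h = partition_fn n J \<tau> h h1" for h
  have dW: "((\<lambda>h. W h \<sigma>) has_real_derivative (\<Sum>j<n. \<sigma> j) * W h \<sigma>) (at h)" for \<sigma>
    unfolding W_def hamiltonian_def by (auto intro!: derivative_eq_intros)
  have Z_eq: "Z h = (\<Sum>\<sigma>\<in>spins n. W h \<sigma>)" for h
    by (simp add: partition_fn_def W_def Z_def)
  have gibbs_eq: "gibbs n J \<tau> h h1 g = (\<Sum>\<sigma>\<in>spins n. g \<sigma> * W h \<sigma>) / Z h" for g h
    by (simp add: gibbs_def Z_def W_def)
  have "((\<lambda>h. (\<Sum>\<sigma>\<in>spins n. f \<sigma> * W h \<sigma>) / Z h) has_real_derivative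
     ((\<Sum>\<sigma>\<in>spins n. f \<sigma> * ((\<Sum>j<n. \<sigma> j) * W h \<sigma>)) * Z h
      - (\<Sum>\<sigma>\<in>spins n. f \<sigma> * W h \<sigma>) * (\<Sum>\<sigma>\<in>spins n. (\<Sum>j<n. \<sigma> j) * W h \<sigma>))
     / (Z h * Z h)) (at h)"
    using partition_fn_pos[of n J \<tau> h h1] unfolding Z_eq
    by (intro DERIV_divide DERIV_sum DERIV_cmult dW) (simp_all add: Z_def flip: Z_eq)
  then show ?thesis
    using partition_fn_pos[of n J \<tau> h h1]
    unfolding gibbs_eq Z_def by (simp add: diff_divide_distrib mult_ac)
qed

lemma continuous_on_gibbs: "continuous_on S (\<lambda>h. gibbs n J \<tau> h h1 f)"
  using has_real_derivative_gibbs
  by (blast intro: continuous_at_imp_continuous_on DERIV_isCont)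

lemma has_real_derivative_sum_magnetization:
  "((\<lambda>h. \<Sum>i<n. gibbs n J \<tau> h h1 (\<lambda>\<sigma>. \<sigma> i)) has_real_derivative
     (\<Sum>i<n. \<Sum>j<n. gibbs n J \<tau> h h1 (\<lambda>\<sigma>. \<sigma> i * \<sigma> j)
        - gibbs n J \<tau> h h1 (\<lambda>\<sigma>. \<sigma> i) * gibbs n J \<tau> h h1 (\<lambda>\<sigma>. \<sigma> j))) (at h)"
  using DERIV_sum[of "{..<n}", OF has_real_derivative_gibbs]
  by (simp add: sum_distrib_left gibbs_sum sum_subtractf)

lemma gibbs_rep_prod:
  "gibbs_rep n J \<tau> h h1 k (\<lambda>s. \<Prod>a<k. f (s a)) = gibbs n J \<tau> h h1 f ^ k"
proof -
  let ?W = "\<lambda>\<sigma>. exp (- hamiltonian n J \<tau> h h1 \<sigma>)"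
  have "(\<Sum>s\<in>PiE {..<k} (\<lambda>_. spins n). \<Prod>a<k. f (s a) * ?W (s a))
      = (\<Prod>a<k. \<Sum>\<sigma>\<in>spins n. f \<sigma> * ?W \<sigma>)"
    by (rule prod_sum_PiE[symmetric]) (simp_all add: finite_spins)
  then show ?thesis
    unfolding gibbs_rep_def gibbs_def by (simp add: prod.distrib power_divide)
qed

lemma gibbs_rep_add:
  "gibbs_rep n J \<tau> h h1 k (\<lambda>s. f s + g s)
   = gibbs_rep n J \<tau> h h1 k f + gibbs_rep n J \<tau> h h1 k g"
  unfolding gibbs_rep_def by (simp add: distrib_right sum.distrib add_divide_distrib)

lemma gibbs_rep_cmult:
  "gibbs_rep n J \<tau> h h1 k (\<lambda>s. c * f s) = c * gibbs_rep n J \<tau> h h1 k f"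
  unfolding gibbs_rep_def by (simp add: sum_distrib_left mult.assoc)

lemma gibbs_rep_sum:
  "gibbs_rep n J \<tau> h h1 k (\<lambda>s. \<Sum>i\<in>A. f i s) = (\<Sum>i\<in>A. gibbs_rep n J \<tau> h h1 k (f i))"
  unfolding gibbs_rep_def
  by (simp add: sum_distrib_right sum_divide_distrib[symmetric] sum.swap[of _ A])

lemma gibbs_rep_const: "gibbs_rep n J \<tau> h h1 k (\<lambda>_. c) = c"
  using gibbs_rep_prod[of n J \<tau> h h1 k "\<lambda>_. 1"] gibbs_rep_cmult[of n J \<tau> h h1 k c "\<lambda>_. 1"]
  by (simp add: gibbs_const)

lemma gibbs_rep_variance:
  "gibbs_rep n J \<tau> h h1 k (\<lambda>s. (f s - gibbs_rep n J \<tau> h h1 k f)\<^sup>2)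
   = gibbs_rep n J \<tau> h h1 k (\<lambda>s. (f s)\<^sup>2) - (gibbs_rep n J \<tau> h h1 k f)\<^sup>2"
proof -
  define m where "m = gibbs_rep n J \<tau> h h1 k f"
  have "(\<lambda>s. (f s - m)\<^sup>2) = (\<lambda>s. ((f s)\<^sup>2 + (- 2 * m) * f s) + m\<^sup>2)"
    by (simp add: fun_eq_iff power2_eq_square algebra_simps)
  then have "gibbs_rep n J \<tau> h h1 k (\<lambda>s. (f s - m)\<^sup>2)
      = gibbs_rep n J \<tau> h h1 k (\<lambda>s. (f s)\<^sup>2) + (- 2 * m) * m + m\<^sup>2"
    by (simp only: gibbs_rep_add gibbs_rep_cmult gibbs_rep_const flip: m_def)
  then show ?thesis
    by (simp add: power2_eq_square flip: m_def)
qed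

lemma gibbs_rep_overlap:
  "gibbs_rep n J \<tau> h h1 k (overlap n k) = (\<Sum>i<n. gibbs n J \<tau> h h1 (\<lambda>\<sigma>. \<sigma> i) ^ k) / real n"
proof -
  have site: "gibbs_rep n J \<tau> h h1 k (\<lambda>s. \<Prod>a<k. s a i) = gibbs n J \<tau> h h1 (\<lambda>\<sigma>. \<sigma> i) ^ k" for i
    by (rule gibbs_rep_prod)
  show ?thesis
    unfolding overlap_def gibbs_rep_cmult gibbs_rep_sum site by simp
qed

lemma gibbs_rep_overlap_squared:
  "gibbs_rep n J \<tau> h h1 k (\<lambda>s. (overlap n k s)\<^sup>2)
   = (\<Sum>i<n. \<Sum>j<n. gibbs n J \<tau> h h1 (\<lambda>\<sigma>. \<sigma> i * \<sigma> j) ^ k) / (real n)\<^sup>2"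
proof -
  have overlap_squared: "(\<lambda>s. (overlap n k s)\<^sup>2)
      = (\<lambda>s. 1 / (real n)\<^sup>2 * (\<Sum>i<n. \<Sum>j<n. \<Prod>a<k. s a i * s a j))"
    unfolding overlap_def by (simp add: fun_eq_iff power2_eq_square sum_product prod.distrib)
  have pair: "gibbs_rep n J \<tau> h h1 k (\<lambda>s. \<Prod>a<k. s a i * s a j)
      = gibbs n J \<tau> h h1 (\<lambda>\<sigma>. \<sigma> i * \<sigma> j) ^ k" for i j
    by (rule gibbs_rep_prod)
  show ?thesis
    unfolding overlap_squared gibbs_rep_cmult gibbs_rep_sum pair by simp
qed

lemma variance_overlap:
  "gibbs_rep n J \<tau> h h1 k (\<lambda>s. (overlap n k s - gibbs_rep n J \<tau> h h1 k (overlap n k))\<^sup>2)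
   = (\<Sum>i<n. \<Sum>j<n. gibbs n J \<tau> h h1 (\<lambda>\<sigma>. \<sigma> i * \<sigma> j) ^ k
        - (gibbs n J \<tau> h h1 (\<lambda>\<sigma>. \<sigma> i) * gibbs n J \<tau> h h1 (\<lambda>\<sigma>. \<sigma> j)) ^ k) / (real n)\<^sup>2"
  unfolding gibbs_rep_variance
  unfolding gibbs_rep_overlap gibbs_rep_overlap_squared
  by (simp add: power2_eq_square power_mult_distrib sum_product sum_subtractf diff_divide_distrib)

lemma power_diff_le_mult_diff:
  fixes a b :: real
  assumes "b \<le> a" "\<bar>a\<bar> \<le> 1" "\<bar>b\<bar> \<le> 1"
  shows "a ^ k - b ^ k \<le> real k * (a - b)"
proof -
  have "(\<Sum>i<k. b ^ (k - Suc i) * a ^ i) \<le> (\<Sum>i<k. 1)"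
  proof (rule sum_mono)
    fix i
    have "\<bar>b ^ (k - Suc i) * a ^ i\<bar> \<le> 1"
      using assms by (simp add: abs_mult power_abs power_le_one mult_le_one)
    then show "b ^ (k - Suc i) * a ^ i \<le> 1" by simp
  qed
  then have "(a - b) * (\<Sum>i<k. b ^ (k - Suc i) * a ^ i) \<le> (a - b) * k"
    using assms(1) by (intro mult_left_mono) auto
  then show ?thesis
    by (simp add: power_diff_sumr2 mult.commute)
qed

lemma variance_overlap_le:
  assumes "\<And>i j. i < n \<Longrightarrow> j < n \<Longrightarrow>
    gibbs n J \<tau> h h1 (\<lambda>\<sigma>. \<sigma> i) * gibbs n J \<tau> h h1 (\<lambda>\<sigma>. \<sigma> j) \<le> gibbs n J \<tau> h h1 (\<lambda>\<sigma>. \<sigma> i * \<sigma> j)"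
  shows "gibbs_rep n J \<tau> h h1 k (\<lambda>s. (overlap n k s - gibbs_rep n J \<tau> h h1 k (overlap n k))\<^sup>2)
    \<le> real k / (real n)\<^sup>2 * (\<Sum>i<n. \<Sum>j<n. gibbs n J \<tau> h h1 (\<lambda>\<sigma>. \<sigma> i * \<sigma> j)
        - gibbs n J \<tau> h h1 (\<lambda>\<sigma>. \<sigma> i) * gibbs n J \<tau> h h1 (\<lambda>\<sigma>. \<sigma> j))"
proof -
  let ?m = "\<lambda>i. gibbs n J \<tau> h h1 (\<lambda>\<sigma>. \<sigma> i)"
  let ?g = "\<lambda>i j. gibbs n J \<tau> h h1 (\<lambda>\<sigma>. \<sigma> i * \<sigma> j)"
  have "?g i j ^ k - (?m i * ?m j) ^ k \<le> k * (?g i j - ?m i * ?m j)" if "i < n" "j < n" for i j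
  proof (rule power_diff_le_mult_diff)
    show "?m i * ?m j \<le> ?g i j" using assms that .
    show "\<bar>?g i j\<bar> \<le> 1" "\<bar>?m i * ?m j\<bar> \<le> 1"
      by (auto simp: abs_mult abs_spin intro!: abs_gibbs_le_one mult_le_one)
  qed
  then have "(\<Sum>i<n. \<Sum>j<n. ?g i j ^ k - (?m i * ?m j) ^ k)
      \<le> (\<Sum>i<n. \<Sum>j<n. k * (?g i j - ?m i * ?m j))"
    by (intro sum_mono) simp
  also have "\<dots> = k * (\<Sum>i<n. \<Sum>j<n. ?g i j - ?m i * ?m j)"
    by (simp add: sum_distrib_left)
  finally show ?thesis
    unfolding variance_overlap by (simp add: divide_right_mono)
qed

lemma integral_le_antiderivative_diff:
  fixes f g G :: "real \<Rightarrow> real"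
  assumes "a \<le> b" and "f integrable_on {a..b}"
    and "\<And>x. x \<in> {a..b} \<Longrightarrow> (G has_real_derivative g x) (at x)"
    and "\<And>x. x \<in> {a..b} \<Longrightarrow> f x \<le> g x"
  shows "integral {a..b} f \<le> G b - G a"
proof -
  have "(g has_integral (G b - G a)) {a..b}"
    using assms(1,3)
    by (intro fundamental_theorem_of_calculus)
       (auto simp flip: has_real_derivative_iff_has_vector_derivative intro: has_field_derivative_at_within)
  with assms(2,4) show ?thesis
    by (metis has_integral_integral has_integral_le)
qed

theorem theorem2p1:
  fixes n k :: nat and \<theta> hlo hhi h1 \<alpha> :: real
    and J :: "nat set \<Rightarrow> real" and \<tau> :: "nat \<Rightarrow> nat"
  assumes "n \<ge> 1" and "1/2 < \<theta>" and "\<theta> \<le> 7/8" and "k \<ge> 1"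
    and "0 < hlo" and "hlo \<le> hhi" and "hhi < 1"
    and "0 \<le> h1" and "h1 \<le> 1" and "0 \<le> \<alpha>" and "\<alpha> \<le> 1"
    and "\<And>X. X \<subseteq> {..<n} \<Longrightarrow> J X \<ge> 0"
    and "\<And>h0 i j. h0 \<in> {hlo..hhi} \<Longrightarrow> i < n \<Longrightarrow> j < n \<Longrightarrow>
           gibbs n J \<tau> h0 h1 (\<lambda>\<sigma>. \<sigma> i * \<sigma> j)
           - gibbs n J \<tau> h0 h1 (\<lambda>\<sigma>. \<sigma> i) * gibbs n J \<tau> h0 h1 (\<lambda>\<sigma>. \<sigma> j) \<ge> 0"
  shows "integral {hlo..hhi} (\<lambda>h0. gibbs_rep n J \<tau> h0 h1 k
           (\<lambda>s. (overlap n k s - gibbs_rep n J \<tau> h0 h1 k (overlap n k))\<^sup>2))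
         \<le> 2 * real k / real n"
proof -
  let ?V = "\<lambda>h. gibbs_rep n J \<tau> h h1 k
    (\<lambda>s. (overlap n k s - gibbs_rep n J \<tau> h h1 k (overlap n k))\<^sup>2)"
  let ?D = "\<lambda>h. \<Sum>i<n. \<Sum>j<n. gibbs n J \<tau> h h1 (\<lambda>\<sigma>. \<sigma> i * \<sigma> j)
    - gibbs n J \<tau> h h1 (\<lambda>\<sigma>. \<sigma> i) * gibbs n J \<tau> h h1 (\<lambda>\<sigma>. \<sigma> j)"
  define M where "M h = real k / (real n)\<^sup>2 * (\<Sum>i<n. gibbs n J \<tau> h h1 (\<lambda>\<sigma>. \<sigma> i))" for h
  have "integral {hlo..hhi} ?V \<le> M hhi - M hlo"
  proof (rule integral_le_antiderivative_diff)
    show "?V integrable_on {hlo..hhi}"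
      unfolding variance_overlap using assms(1)
      by (intro integrable_continuous_interval continuous_intros continuous_on_gibbs) auto
    show "(M has_real_derivative real k / (real n)\<^sup>2 * ?D h) (at h)" for h
      unfolding M_def[abs_def] by (intro DERIV_cmult has_real_derivative_sum_magnetization)
    show "?V h \<le> real k / (real n)\<^sup>2 * ?D h" if "h \<in> {hlo..hhi}" for h
      using assms(13)[OF that] by (intro variance_overlap_le) simp
  qed (fact assms(6))
  also have "\<dots> \<le> real k / (real n)\<^sup>2 * (2 * real n)"
    unfolding M_def right_diff_distrib[symmetric]
    using abs_sum_magnetization_le[of n J \<tau> hhi h1] abs_sum_magnetization_le[of n J \<tau> hlo h1]
    by (intro mult_left_mono) (auto simp: abs_le_iff)
  also have "\<dots> = 2 * real k / real n"
    using assms(1) by (simp add: power2_eq_square)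
  finally show ?thesis .
qed

end
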